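(* There is an absolute constant $c>0$ such that for every $n\ge1$, every $\eta\in[n]=\{1,\dots,n\}$, and every comparison-based search algorithm (deterministic or randomized) which, given a predicted distribution $\hat p$ on $[n]$ and a target key $a\in\{a_1,\dots,a_n\}$ (with $a_1<\dots<a_n$), locates the index of $a$ using comparisons, there exists an instance $(p,\hat p)$ of distributions on $[n]$ with $H(p)=0$ and earth mover's distance between $p$ and $\hat p$ at most $\eta$ on which the algorithm's expected number of comparisons (over $a=a_i$ with probability $p_i$ and over its internal randomness) is at least $c\log\eta$.
   Context: All logarithms are base 2. $H(p)=-\sum_i p_i\log p_i$ is the entropy. The earth mover's distance between distributions $P,Q$ on $[n]$ is $\inf_{\gamma\in\Pi(P,Q)}\mathbb{E}_{(x,y)\sim\gamma}|x-y|$, with $\Pi(P,Q)$ the set of couplings of $P$ and $Q$. A comparison of the target $a$ with a key $a_j$ returns whether $a<a_j$, $a=a_j$ or $a>a_j$ and counts as one query. *)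

theory Defs
  imports "HOL-Probability.Probability"
begin

text \<open>A node Node j l e g compares the target a with the
  key a_j and continues in l if a < a_j, in e if a = a_j, in g if a > a_j. Since a_1 < ... < a_n, comparing a = a_i
  with a_j amounts to comparing i with j.\<close>
datatype ctree = Leaf nat | Node nat ctree ctree ctree

fun run :: "ctree \<Rightarrow> nat \<Rightarrow> nat" where
  "run (Leaf k) i = k"
| "run (Node j l e g) i = (if i < j then run l i else if i = j then run e i else run g i)"

fun cost :: "ctree \<Rightarrow> nat \<Rightarrow> nat" where
  "cost (Leaf k) i = 0"
| "cost (Node j l e g) i = 1 + (if i < j then cost l i else if i = j then cost e i else cost g i)"

fun tkeys :: "ctree \<Rightarrow> nat set" where
  "tkeys (Leaf k) = {}"
| "tkeys (Node j l e g) = insert j (tkeys l \<union> tkeys e \<union> tkeys g)"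

definition correct_tree :: "nat \<Rightarrow> ctree \<Rightarrow> bool" where
  "correct_tree n T \<longleftrightarrow> tkeys T \<subseteq> {1..n} \<and> (\<forall>i\<in>{1..n}. run T i = i)"

definition dist_on :: "nat \<Rightarrow> nat pmf \<Rightarrow> bool" where
  "dist_on n p \<longleftrightarrow> set_pmf p \<subseteq> {1..n}"

definition entropy :: "nat \<Rightarrow> nat pmf \<Rightarrow> real" where
  "entropy n p = - (\<Sum>i\<in>{1..n}. (if pmf p i = 0 then 0 else pmf p i * log 2 (pmf p i)))"

definition couplings :: "nat pmf \<Rightarrow> nat pmf \<Rightarrow> (nat \<times> nat) pmf set" where
  "couplings P Q = {\<gamma>. map_pmf fst \<gamma> = P \<and> map_pmf snd \<gamma> = Q}"

definition emd :: "nat pmf \<Rightarrow> nat pmf \<Rightarrow> real" where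
  "emd P Q = (INF \<gamma>\<in>couplings P Q. measure_pmf.expectation \<gamma> (\<lambda>(x, y). \<bar>real x - real y\<bar>))"

text \<open>Expected number of comparisons of a randomized algorithm (a distribution over
  deterministic comparison trees, chosen depending on the prediction) when the target
  is a_i with i drawn from p.\<close>
definition exp_cost :: "ctree pmf \<Rightarrow> nat pmf \<Rightarrow> ennreal" where
  "exp_cost R p = (\<integral>\<^sup>+ i. (\<integral>\<^sup>+ T. ennreal (real (cost T i)) \<partial>measure_pmf R) \<partial>measure_pmf p)"

end

theory Submission
  imports Defs
begin

text \<open>A comparison tree has at most \<open>3^k\<close> leaves of depth at most \<open>k\<close>, so among any \<open>\<eta>\<close> targets
  it answers correctly, at least \<open>\<eta> - 3^k\<close> need more than \<open>k\<close> comparisons; taking \<open>k \<approx> log \<eta> / 4\<close>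
  the total cost over \<open>a_1, \<dots>, a_\<eta>\<close> is \<open>\<Omega>(\<eta> log \<eta>)\<close> for every tree the algorithm may use.
  Feed the algorithm the fixed prediction \<open>\<delta>_1\<close>: averaging over its random tree, some target
  \<open>a_i\<close> with \<open>i \<le> \<eta>\<close> has expected cost \<open>\<Omega>(log \<eta>)\<close>, and the point mass \<open>\<delta>_i\<close> has entropy 0 and
  earth mover's distance \<open>i - 1 < \<eta>\<close> from the prediction.\<close>

lemma finite_run_cost_le: "finite (run T ` {i. cost T i \<le> k})"
proof (induction T arbitrary: k)
  case (Node j l e g)
  have "run (Node j l e g) ` {i. cost (Node j l e g) i \<le> k}
        \<subseteq> run l ` {i. cost l i \<le> k} \<union> run e ` {i. cost e i \<le> k} \<union> run g ` {i. cost g i \<le> k}"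
    by auto
  then show ?case using Node.IH by (meson finite_UnI finite_subset)
qed simp

lemma card_run_cost_le: "card (run T ` {i. cost T i \<le> k}) \<le> 3 ^ k"
proof (induction T arbitrary: k)
  case (Leaf x)
  have "run (Leaf x) ` {i. cost (Leaf x) i \<le> k} \<subseteq> {x}" by auto
  then have "card (run (Leaf x) ` {i. cost (Leaf x) i \<le> k}) \<le> 1"
    using card_mono[of "{x}"] by fastforce
  then show ?case using one_le_power[of "3::nat" k] by linarith
next
  case (Node j l e g)
  show ?case
  proof (cases k)
    case 0
    then show ?thesis by simp
  next
    case (Suc k')
    let ?L = "run l ` {i. cost l i \<le> k'}"
    let ?E = "run e ` {i. cost e i \<le> k'}"
    let ?G = "run g ` {i. cost g i \<le> k'}"
    have "run (Node j l e g) ` {i. cost (Node j l e g) i \<le> k} \<subseteq> ?L \<union> ?E \<union> ?G"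
      using Suc by (auto split: if_splits)
    then have "card (run (Node j l e g) ` {i. cost (Node j l e g) i \<le> k}) \<le> card (?L \<union> ?E \<union> ?G)"
      by (intro card_mono) (simp_all add: finite_run_cost_le)
    also have "\<dots> \<le> card ?L + card ?E + card ?G"
      by (meson card_Un_le add_le_mono1 order_trans)
    also have "\<dots> \<le> 3 ^ k" using Node.IH[of k'] Suc by simp
    finally show ?thesis .
  qed
qed

lemma sum_cost_ge_if_run_correct:
  assumes "finite W" and "\<And>i. i \<in> W \<Longrightarrow> run T i = i"
  shows "(card W - 3 ^ k) * (k + 1) \<le> (\<Sum>i\<in>W. cost T i)"
proof -
  define S where "S = {i\<in>W. cost T i \<le> k}"
  have "S \<subseteq> run T ` {i. cost T i \<le> k}"
    unfolding S_def using assms(2) by (force simp: image_iff)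
  then have "card S \<le> 3 ^ k"
    using card_mono[OF finite_run_cost_le] card_run_cost_le order_trans by metis
  moreover have "card (W - S) = card W - card S"
    using assms(1) by (intro card_Diff_subset) (auto simp: S_def)
  ultimately have "(card W - 3 ^ k) * (k + 1) \<le> card (W - S) * (k + 1)"
    by (intro mult_le_mono1) simp
  also have "\<dots> = (\<Sum>i\<in>W - S. k + 1)" by simp
  also have "\<dots> \<le> (\<Sum>i\<in>W - S. cost T i)" by (rule sum_mono) (auto simp: S_def)
  also have "\<dots> \<le> (\<Sum>i\<in>W. cost T i)" using assms(1) by (intro sum_mono2) auto
  finally show ?thesis .
qed

lemma exists_depth_with_large_deficit:
  fixes \<eta> :: nat
  assumes "\<eta> \<ge> 1"
  shows "\<exists>k. real \<eta> * log 2 (real \<eta>) / 8 \<le> real ((\<eta> - 3 ^ k) * (k + 1))"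
proof (cases "\<eta> \<ge> 4")
  case True
  define L where "L = log 2 (real \<eta>)"
  have L2: "L \<ge> 2" unfolding L_def using True by (simp add: le_log_iff)
  define k where "k = nat \<lfloor>L / 4\<rfloor>"
  have k_le: "real k \<le> L / 4" and k_ge: "L / 4 \<le> real k + 1"
    unfolding k_def using L2 by linarith+
  have "(3::real) ^ k \<le> 4 ^ k" by (simp add: power_mono)
  also have "\<dots> = 2 powr (2 * real k)"
    by (simp add: powr_realpow[symmetric] power_mult[symmetric] powr_powr[symmetric])
  also have "\<dots> \<le> 2 powr (L - 1)" using k_le L2 by (intro powr_mono) auto
  also have "\<dots> = real \<eta> / 2" unfolding L_def using assms by (simp add: powr_diff)
  finally have pow_le: "(3::real) ^ k \<le> real \<eta> / 2" .
  then have "(3::real) ^ k \<le> real \<eta>" by linarith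
  then have "3 ^ k \<le> \<eta>" by (metis of_nat_le_iff of_nat_numeral of_nat_power)
  then have "real (\<eta> - 3 ^ k) = real \<eta> - 3 ^ k" by (simp add: of_nat_diff)
  then have "real ((\<eta> - 3 ^ k) * (k + 1)) = (real \<eta> - 3 ^ k) * (real k + 1)"
    by (simp only: of_nat_mult of_nat_add of_nat_1)
  moreover have "real \<eta> / 2 * (L / 4) \<le> (real \<eta> - 3 ^ k) * (real k + 1)"
    using pow_le k_ge L2 of_nat_0_le_iff[of \<eta>] by (intro mult_mono) linarith+
  ultimately show ?thesis unfolding L_def by (intro exI[of _ k]) simp
next
  case False
  then have "log 2 (real \<eta>) \<le> 2" using assms by (simp add: log_le_iff)
  then have quarter: "real \<eta> * log 2 (real \<eta>) / 8 \<le> real \<eta> / 4"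
    using mult_left_mono[of _ 2 "real \<eta>"] by simp
  have "real \<eta> * log 2 (real \<eta>) / 8 \<le> real (\<eta> - 1)"
  proof (cases "\<eta> = 1")
    case False
    then have "real \<eta> \<ge> 2" using assms by simp
    moreover have "real (\<eta> - 1) = real \<eta> - 1" using assms by (simp add: of_nat_diff)
    ultimately show ?thesis using quarter by linarith
  qed simp
  then show ?thesis by (intro exI[of _ 0]) simp
qed

lemma sum_cost_correct_tree_ge:
  assumes "correct_tree n T" and "\<eta> \<in> {1..n}"
  shows "real \<eta> * log 2 (real \<eta>) / 8 \<le> (\<Sum>i\<in>{1..\<eta>}. real (cost T i))"
proof -
  obtain k where k: "real \<eta> * log 2 (real \<eta>) / 8 \<le> real ((\<eta> - 3 ^ k) * (k + 1))"
    using exists_depth_with_large_deficit[of \<eta>] assms(2) by auto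
  have "\<forall>i\<in>{1..\<eta>}. run T i = i"
    using assms unfolding correct_tree_def by auto
  then have "real ((\<eta> - 3 ^ k) * (k + 1)) \<le> real (\<Sum>i\<in>{1..\<eta>}. cost T i)"
    using sum_cost_ge_if_run_correct[of "{1..\<eta>}" T k] by (simp only: of_nat_le_iff) simp
  then show ?thesis using k by simp
qed

text \<open>The averaging half of Yao's principle.\<close>
lemma exists_expected_ge_average:
  fixes R :: "'a pmf" and f :: "'a \<Rightarrow> 'b \<Rightarrow> real"
  assumes "finite W" "W \<noteq> {}" and "\<And>x i. f x i \<ge> 0"
    and "\<And>x. x \<in> set_pmf R \<Longrightarrow> real (card W) * B \<le> (\<Sum>i\<in>W. f x i)"
  shows "\<exists>i\<in>W. ennreal B \<le> (\<integral>\<^sup>+ x. ennreal (f x i) \<partial>measure_pmf R)"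
proof -
  define g where "g i = (\<integral>\<^sup>+ x. ennreal (f x i) \<partial>measure_pmf R)" for i
  have "Max (g ` W) \<in> g ` W" using assms(1,2) by simp
  then obtain i where i: "i \<in> W" "g i = Max (g ` W)" by auto
  have "ennreal (real (card W) * B) = (\<integral>\<^sup>+ x. ennreal (real (card W) * B) \<partial>measure_pmf R)"
    by (simp add: measure_pmf.emeasure_space_1)
  also have "\<dots> \<le> (\<integral>\<^sup>+ x. ennreal (\<Sum>i\<in>W. f x i) \<partial>measure_pmf R)"
    using assms(4) by (intro nn_integral_mono_AE) (simp add: AE_measure_pmf_iff ennreal_leI)
  also have "\<dots> = (\<integral>\<^sup>+ x. (\<Sum>i\<in>W. ennreal (f x i)) \<partial>measure_pmf R)"
    using assms(3) by (simp add: sum_nonneg)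
  also have "\<dots> = (\<Sum>i\<in>W. g i)"
    unfolding g_def by (rule nn_integral_sum) simp
  also have "\<dots> \<le> of_nat (card W) * g i"
    using i assms(1) sum_bounded_above[of W g "g i"] by simp
  finally have "of_nat (card W) * ennreal B \<le> of_nat (card W) * g i"
    using assms(1,2) by (cases "B \<ge> 0") (auto simp: ennreal_mult ennreal_neg ennreal_of_nat_eq_real_of_nat)
  then have "ennreal B \<le> g i"
    using assms(1,2) by (subst (asm) ennreal_mult_le_mult_iff) auto
  then show ?thesis using i(1) unfolding g_def by blast
qed

lemma entropy_return_pmf: "entropy n (return_pmf i) = 0"
  unfolding entropy_def by (auto simp: indicator_def intro!: sum.neutral)

lemma emd_return_pmf_le: "emd (return_pmf i) (return_pmf j) \<le> \<bar>real i - real j\<bar>"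
proof -
  have "return_pmf (i, j) \<in> couplings (return_pmf i) (return_pmf j)"
    unfolding couplings_def by simp
  then have "emd (return_pmf i) (return_pmf j)
             \<le> measure_pmf.expectation (return_pmf (i, j)) (\<lambda>(x, y). \<bar>real x - real y\<bar>)"
    unfolding emd_def by (intro cINF_lower bdd_belowI[of _ 0]) (auto intro!: integral_nonneg_AE)
  then show ?thesis by simp
qed

theorem theorem3p2:
  "\<exists>c::real. c > 0 \<and>
    (\<forall>n::nat. n \<ge> 1 \<longrightarrow>
     (\<forall>\<eta>::nat. \<eta> \<in> {1..n} \<longrightarrow>
      (\<forall>A :: nat pmf \<Rightarrow> ctree pmf.
         (\<forall>q. dist_on n q \<longrightarrow> (\<forall>T\<in>set_pmf (A q). correct_tree n T)) \<longrightarrow>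
         (\<exists>p q. dist_on n p \<and> dist_on n q \<and> entropy n p = 0 \<and>
                emd p q \<le> real \<eta> \<and>
                exp_cost (A q) p \<ge> ennreal (c * log 2 (real \<eta>))))))"
proof (intro exI[of _ "1/8"] conjI allI impI)
  fix n \<eta> :: nat and A :: "nat pmf \<Rightarrow> ctree pmf"
  assume \<eta>: "\<eta> \<in> {1..n}"
    and correct: "\<forall>q. dist_on n q \<longrightarrow> (\<forall>T\<in>set_pmf (A q). correct_tree n T)"
  define q where "q = return_pmf (1::nat)"
  have q: "dist_on n q" unfolding q_def dist_on_def using \<eta> by auto
  have total: "real (card {1..\<eta>}) * (1/8 * log 2 (real \<eta>)) \<le> (\<Sum>i\<in>{1..\<eta>}. real (cost T i))"
    if "T \<in> set_pmf (A q)" for T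
    using sum_cost_correct_tree_ge[of n T \<eta>] correct q that \<eta> by simp
  have "\<exists>i\<in>{1..\<eta>}. ennreal (1/8 * log 2 (real \<eta>)) \<le> (\<integral>\<^sup>+ T. real (cost T i) \<partial>measure_pmf (A q))"
    by (rule exists_expected_ge_average) (use total \<eta> in auto)
  then obtain i where i: "i \<in> {1..\<eta>}"
    and cost_i: "ennreal (1/8 * log 2 (real \<eta>)) \<le> (\<integral>\<^sup>+ T. real (cost T i) \<partial>measure_pmf (A q))"
    by blast
  show "\<exists>p q. dist_on n p \<and> dist_on n q \<and> entropy n p = 0 \<and> emd p q \<le> real \<eta> \<and>
              exp_cost (A q) p \<ge> ennreal (1/8 * log 2 (real \<eta>))"
  proof (intro exI conjI)
    show "dist_on n (return_pmf i)" unfolding dist_on_def using i \<eta> by auto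
    show "emd (return_pmf i) q \<le> real \<eta>"
      unfolding q_def using emd_return_pmf_le[of i 1] i by simp
    show "ennreal (1/8 * log 2 (real \<eta>)) \<le> exp_cost (A q) (return_pmf i)"
      unfolding exp_cost_def using cost_i by (simp add: nn_integral_return_pmf)
  qed (fact q, fact entropy_return_pmf)
qed simp

end
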